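(* Let $\mu$ be a positive Borel measure on $\mathbb{C}$ with finite moments $m_{j,k}=\int_{\mathbb{C}}z^j\overline z^kd\mu(z)$, and assume the moment matrix is tri-diagonal, i.e. $m_{j,k}=0$ whenever $|j-k|\ge2$. Let $\widehat m_{j,k}=\operatorname{Re}m_{j,k}$, $g_{j,k}=2(\widehat m_{j+1,k}-\widehat m_{j,k+1})$, $G_k=(g_{i,j})_{i,j=0}^{2k-1}$, $\Delta_{-1}=1$, $\Delta_k=\mathrm{Pf}(G_{k+1})$ for $k\ge0$ (assumed nonzero), and $\mathcal Z_j=\frac12\frac{\Delta_{j-1}}{\Delta_{j-2}}$ for $j\ge1$. Then monic skew-orthogonal polynomials with respect to the skew-product $\langle f,g\rangle_s=\int_{\mathbb{C}}(f(z)\overline{g(z)}-g(z)\overline{f(z)})(z-\overline z)d\mu(z)$ are given by $q_{2k}(z)=\sum_{j=0}^{2k}\alpha_{2k,j}z^j$, $q_{2k+1}(z)=\sum_{j=0}^{2k+1}\beta_{2k+1,j}z^j$ with $\alpha_{2k,2k}=1$, $\beta_{2k+1,2k+1}=1$, $\beta_{2k+1,2k}=\beta_{2k+1,2k-1}=0$, and the remaining coefficients determined by, for $j=1,2,\dots,k$ (with the convention $\alpha_{2k,2k+1}=0$): $$\mathcal Z_j\alpha_{2k,2j-1}=-\widehat m_{2j-1,2j}\alpha_{2k,2j},\qquad\mathcal Z_j\alpha_{2k,2j-2}=\widehat m_{2j,2j+1}\alpha_{2k,2j+1}+\widehat m_{2j,2j}\alpha_{2k,2j},$$ $$\mathcal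 Z_j\beta_{2k+1,2j-1}=-\widehat m_{2j-1,2j}\beta_{2k+1,2j},\qquad\mathcal Z_j\beta_{2k+1,2j-2}=\widehat m_{2j,2j+1}\beta_{2k+1,2j+1}+\widehat m_{2j,2j}\beta_{2k+1,2j}.$$
   Context: Polynomials $(q_k)_{k\ge0}$ with $\deg q_k=k$ are skew-orthogonal if $\langle q_{2k},q_{2\ell}\rangle_s=\langle q_{2k+1},q_{2\ell+1}\rangle_s=0$ and $\langle q_{2k},q_{2\ell+1}\rangle_s=-\langle q_{2\ell+1},q_{2k}\rangle_s=r_k\delta_{k,\ell}$; monic means leading coefficient $1$. $\mathrm{Pf}$ denotes the Pfaffian of an antisymmetric matrix. *)

theory Defs
  imports "HOL-Analysis.Analysis" "HOL-Computational_Algebra.Polynomial"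
begin

definition moment :: "complex measure \<Rightarrow> nat \<Rightarrow> nat \<Rightarrow> complex" where
  "moment M j k = (LINT z|M. z ^ j * cnj z ^ k)"

definition mhat :: "complex measure \<Rightarrow> nat \<Rightarrow> nat \<Rightarrow> real" where
  "mhat M j k = Re (moment M j k)"

definition gmat :: "complex measure \<Rightarrow> nat \<Rightarrow> nat \<Rightarrow> real" where
  "gmat M j k = 2 * (mhat M (j + 1) k - mhat M j (k + 1))"

definition pfaffian :: "nat \<Rightarrow> (nat \<Rightarrow> nat \<Rightarrow> real) \<Rightarrow> real" where
  "pfaffian n A =
     (\<Sum>\<sigma> | \<sigma> permutes {..<2*n}. of_int (sign \<sigma>) * (\<Prod>i<n. A (\<sigma> (2*i)) (\<sigma> (2*i+1))))
     / (2 ^ n * fact n)"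

definition Delta :: "complex measure \<Rightarrow> int \<Rightarrow> real" where
  "Delta M k = (if k = -1 then 1 else pfaffian (nat k + 1) (gmat M))"

definition Zc :: "complex measure \<Rightarrow> nat \<Rightarrow> real" where
  "Zc M j = (1/2) * (Delta M (int j - 1) / Delta M (int j - 2))"

definition skew :: "complex measure \<Rightarrow> (complex \<Rightarrow> complex) \<Rightarrow> (complex \<Rightarrow> complex) \<Rightarrow> complex" where
  "skew M f g = (LINT z|M. (f z * cnj (g z) - g z * cnj (f z)) * (z - cnj z))"

end

(*
  Write g for gmat M. The skew product of z^a and z^b is g a b, so the skew product of
  polynomials with real coefficient vectors c and d is c^T g d, and the tridiagonal moment
  matrix makes the antisymmetric matrix g pentadiagonal. Expanding Pfaffians along the last
  row, the leading Pfaffians P k of g satisfy the three-term recurrence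
  P (k+2) = g(2k+2,2k+3) P (k+1) - g(2k+1,2k+3) g(2k,2k+2) P k, and Z_j = P j / (2 P (j-1)).
  Multiplied by 2 P (j-1), the recursions for the coefficients c of q_n say that c^T g
  vanishes on the first 2 (n div 2) columns: each column has at most five nonzero entries,
  and the column sum times a Pfaffian lies in the ideal generated by the recursions and the
  Pfaffian recurrence. Hence q_n is skew-orthogonal to q_m whenever n < 2 (m div 2), which
  together with antisymmetry is skew-orthogonality.
*)

theory Submission
  imports Defs
begin

hide_const (open) Finite_Cartesian_Product.transpose

section \<open>Expansion of Pfaffians along the last row\<close>

definition pfaffian_term :: "nat \<Rightarrow> (nat \<Rightarrow> nat \<Rightarrow> real) \<Rightarrow> (nat \<Rightarrow> nat) \<Rightarrow> real" where
  "pfaffian_term n A \<sigma> = of_int (sign \<sigma>) * (\<Prod>i<n. A (\<sigma> (2*i)) (\<sigma> (2*i+1)))"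

lemma pfaffian_eq_sum_terms:
  "pfaffian n A = (\<Sum>\<sigma> | \<sigma> permutes {..<2*n}. pfaffian_term n A \<sigma>) / (2 ^ n * fact n)"
  unfolding pfaffian_def pfaffian_term_def by simp

lemma pfaffian_0 [simp]: "pfaffian 0 A = 1"
  unfolding pfaffian_def by simp

lemma pfaffian_cong:
  assumes "\<And>a b. a < 2*n \<Longrightarrow> b < 2*n \<Longrightarrow> A a b = B a b"
  shows "pfaffian n A = pfaffian n B"
proof -
  have "pfaffian_term n A \<sigma> = pfaffian_term n B \<sigma>" if \<sigma>: "\<sigma> permutes {..<2*n}" for \<sigma>
  proof -
    have "\<sigma> x < 2*n" if "x < 2*n" for x
      using permutes_in_image[OF \<sigma>] that by simp
    then show ?thesis
      unfolding pfaffian_term_def by (intro arg_cong2[where f="(*)"] refl prod.cong) (auto intro!: assms)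
  qed
  then show ?thesis
    unfolding pfaffian_eq_sum_terms by (intro arg_cong2[where f="(/)"] sum.cong) auto
qed

lemma pfaffian_term_transpose_in_pair:
  assumes \<sigma>: "\<sigma> permutes {..<2*n}" and i: "i < n" and anti: "\<And>a b. A b a = - A a b"
  shows "pfaffian_term n A (\<sigma> \<circ> transpose (2*i) (2*i+1)) = pfaffian_term n A \<sigma>"
proof -
  let ?F = "\<lambda>\<pi> x. A (\<pi> (2*x)) (\<pi> (2*x+1))"
  let ?\<sigma>' = "\<sigma> \<circ> transpose (2*i) (2*i+1)"
  have sign: "sign ?\<sigma>' = - sign \<sigma>"
    by (subst sign_compose)
      (auto intro: permutation_swap_id permutes_imp_permutation[OF _ \<sigma>] simp: sign_swap_id)
  have "?F ?\<sigma>' i = - ?F \<sigma> i"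
    by (simp add: Transposition.transpose_def anti[of "\<sigma> (2*i)"])
  moreover have "?F ?\<sigma>' x = ?F \<sigma> x" if "x \<noteq> i" for x
    using that by (simp add: Transposition.transpose_def)
  ultimately have "(\<Prod>x<n. ?F ?\<sigma>' x) = - (\<Prod>x<n. ?F \<sigma> x)"
    using i by (simp add: prod.remove[of "{..<n}" i])
  then show ?thesis
    unfolding pfaffian_term_def sign by simp
qed

lemma transpose_pairs_apply:
  fixes i l x :: nat
  shows "(transpose (2*i) (2*l) \<circ> transpose (2*i+1) (2*l+1)) (2*x) = 2 * transpose i l x"
    and "(transpose (2*i) (2*l) \<circ> transpose (2*i+1) (2*l+1)) (2*x+1) = 2 * transpose i l x + 1"
  by (auto simp: Transposition.transpose_def; presburger)+

lemma pfaffian_term_transpose_pairs: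
  assumes \<sigma>: "\<sigma> permutes {..<2*n}" and i: "i < n" and l: "l < n"
  shows "pfaffian_term n A (\<sigma> \<circ> (transpose (2*i) (2*l) \<circ> transpose (2*i+1) (2*l+1)))
       = pfaffian_term n A \<sigma>"
proof -
  let ?\<pi> = "transpose (2*i) (2*l) \<circ> transpose (2*i+1) (2*l+1)"
  let ?F = "\<lambda>x. A (\<sigma> (2*x)) (\<sigma> (2*x+1))"
  have "sign ?\<pi> = 1"
    by (subst sign_compose) (auto intro: permutation_swap_id simp: sign_swap_id)
  then have sign: "sign (\<sigma> \<circ> ?\<pi>) = sign \<sigma>"
    by (subst sign_compose)
      (auto intro: permutation_swap_id permutation_compose permutes_imp_permutation[OF _ \<sigma>])
  have "transpose i l permutes {..<n}"
    using i l by (intro permutes_swap_id) auto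
  then have "(\<Prod>x<n. ?F (transpose i l x)) = (\<Prod>x<n. ?F x)"
    using prod.permute[of "transpose i l" "{..<n}" ?F] by simp
  then show ?thesis
    unfolding pfaffian_term_def sign by (simp only: o_apply transpose_pairs_apply[unfolded o_apply])
qed

(* tau swaps the pair containing p with the last pair and, for even p, also flips that pair *)
lemma pfaffian_term_move_to_last:
  assumes p: "p < 2*Suc n" and anti: "\<And>a b. A b a = - A a b"
  obtains \<tau> where "\<tau> permutes {..<2*Suc n}" "\<tau> (2*n+1) = p"
    "\<And>\<sigma>. \<sigma> permutes {..<2*Suc n} \<Longrightarrow> pfaffian_term (Suc n) A (\<sigma> \<circ> \<tau>) = pfaffian_term (Suc n) A \<sigma>"
proof -
  define i where "i = p div 2"
  have i: "i < Suc n" using p by (simp add: i_def)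
  define \<pi> where "\<pi> = transpose (2*i) (2*n) \<circ> transpose (2*i+1) (2*n+1)"
  define t where "t = transpose (2*i) (2*i+1)"
  have \<pi>: "\<pi> permutes {..<2*Suc n}" and t: "t permutes {..<2*Suc n}"
    using i by (auto simp: \<pi>_def t_def intro!: permutes_compose permutes_swap_id)
  have \<pi>_last: "\<pi> (2*n+1) = 2*i+1"
    by (simp add: \<pi>_def Transposition.transpose_def)
  have \<pi>_inv: "pfaffian_term (Suc n) A (\<sigma> \<circ> \<pi>) = pfaffian_term (Suc n) A \<sigma>"
    if "\<sigma> permutes {..<2*Suc n}" for \<sigma>
    using pfaffian_term_transpose_pairs[OF that i, of n] by (simp add: \<pi>_def)
  show ?thesis
  proof (cases "even p")
    case True
    show ?thesis
    proof (rule that[of "t \<circ> \<pi>"])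
      show "t \<circ> \<pi> permutes {..<2*Suc n}" using \<pi> t by (rule permutes_compose)
      show "(t \<circ> \<pi>) (2*n+1) = p" unfolding o_apply \<pi>_last using True by (simp add: t_def i_def)
      fix \<sigma> assume \<sigma>: "\<sigma> permutes {..<2*Suc n}"
      show "pfaffian_term (Suc n) A (\<sigma> \<circ> (t \<circ> \<pi>)) = pfaffian_term (Suc n) A \<sigma>"
        using \<pi>_inv[OF permutes_compose[OF t \<sigma>]] pfaffian_term_transpose_in_pair[OF \<sigma> i anti]
        by (simp add: o_assoc t_def)
    qed
  next
    case False
    then show ?thesis
      using that[of \<pi>] \<pi> \<pi>_last \<pi>_inv by (simp add: i_def)
  qed
qed

lemma sum_pfaffian_terms_fiber:
  assumes p: "p < 2*Suc n" and anti: "\<And>a b. A b a = - A a b"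
  shows "(\<Sum>\<sigma> | \<sigma> permutes {..<2*Suc n} \<and> \<sigma> p = 2*n+1. pfaffian_term (Suc n) A \<sigma>)
       = (\<Sum>\<sigma> | \<sigma> permutes {..<2*Suc n} \<and> \<sigma> (2*n+1) = 2*n+1. pfaffian_term (Suc n) A \<sigma>)"
proof -
  obtain \<tau> where \<tau>: "\<tau> permutes {..<2*Suc n}" and \<tau>_last: "\<tau> (2*n+1) = p"
    and \<tau>_inv: "\<And>\<sigma>. \<sigma> permutes {..<2*Suc n} \<Longrightarrow>
                  pfaffian_term (Suc n) A (\<sigma> \<circ> \<tau>) = pfaffian_term (Suc n) A \<sigma>"
    using pfaffian_term_move_to_last[where A=A, OF p anti] by blast
  have inv_\<tau>: "inv \<tau> permutes {..<2*Suc n}" "inv \<tau> p = 2*n+1"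
    using permutes_inv[OF \<tau>] \<tau>_last by (auto simp: permutes_inv_eq[OF \<tau>])
  show ?thesis
  proof (rule sum.reindex_bij_witness[where j="\<lambda>\<sigma>. \<sigma> \<circ> \<tau>" and i="\<lambda>\<sigma>. \<sigma> \<circ> inv \<tau>"])
    fix \<sigma> assume "\<sigma> \<in> {\<sigma>. \<sigma> permutes {..<2*Suc n} \<and> \<sigma> p = 2*n+1}"
    then have \<sigma>: "\<sigma> permutes {..<2*Suc n}" "\<sigma> p = 2*n+1" by auto
    show "\<sigma> \<circ> \<tau> \<circ> inv \<tau> = \<sigma>"
      using permutes_inv_o(1)[OF \<tau>] by (simp add: o_assoc[symmetric])
    show "\<sigma> \<circ> \<tau> \<in> {\<sigma>. \<sigma> permutes {..<2*Suc n} \<and> \<sigma> (2*n+1) = 2*n+1}"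
      using \<sigma> \<tau>_last permutes_compose[OF \<tau> \<sigma>(1)] by simp
    show "pfaffian_term (Suc n) A (\<sigma> \<circ> \<tau>) = pfaffian_term (Suc n) A \<sigma>"
      using \<tau>_inv[OF \<sigma>(1)] .
  next
    fix \<sigma> assume "\<sigma> \<in> {\<sigma>. \<sigma> permutes {..<2*Suc n} \<and> \<sigma> (2*n+1) = 2*n+1}"
    then have \<sigma>: "\<sigma> permutes {..<2*Suc n}" "\<sigma> (2*n+1) = 2*n+1" by auto
    show "\<sigma> \<circ> inv \<tau> \<circ> \<tau> = \<sigma>"
      using permutes_inv_o(2)[OF \<tau>] by (simp add: o_assoc[symmetric])
    show "\<sigma> \<circ> inv \<tau> \<in> {\<sigma>. \<sigma> permutes {..<2*Suc n} \<and> \<sigma> p = 2*n+1}"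
      using \<sigma> inv_\<tau> permutes_compose[OF inv_\<tau>(1) \<sigma>(1)] by simp
  qed
qed

lemma sum_pfaffian_terms_fix_last:
  assumes anti: "\<And>a b. A b a = - A a b"
  shows "(\<Sum>\<sigma> | \<sigma> permutes {..<2*Suc n}. pfaffian_term (Suc n) A \<sigma>)
       = of_nat (2*Suc n) *
         (\<Sum>\<sigma> | \<sigma> permutes {..<2*Suc n} \<and> \<sigma> (2*n+1) = 2*n+1. pfaffian_term (Suc n) A \<sigma>)"
proof -
  let ?S = "{\<sigma>. \<sigma> permutes {..<2*Suc n}}"
  have fibers: "{\<sigma> \<in> ?S. inv \<sigma> (2*n+1) = p} = {\<sigma>. \<sigma> permutes {..<2*Suc n} \<and> \<sigma> p = 2*n+1}" for p
    by (auto simp: permutes_inv_eq[where S="{..<2*Suc n}"] permutes_inverses(1))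
  have "(\<Sum>\<sigma>\<in>?S. pfaffian_term (Suc n) A \<sigma>)
      = (\<Sum>p<2*Suc n. \<Sum>\<sigma> \<in> {\<sigma> \<in> ?S. inv \<sigma> (2*n+1) = p}. pfaffian_term (Suc n) A \<sigma>)"
  proof (rule sum.group[symmetric])
    show "finite ?S" by (rule finite_permutations) simp
    show "(\<lambda>\<sigma>. inv \<sigma> (2*n+1)) ` ?S \<subseteq> {..<2*Suc n}"
      using permutes_in_image[OF permutes_inv, where S="{..<2*Suc n}"] by auto
  qed simp
  also have "\<dots> = (\<Sum>p<2*Suc n.
      \<Sum>\<sigma> | \<sigma> permutes {..<2*Suc n} \<and> \<sigma> (2*n+1) = 2*n+1. pfaffian_term (Suc n) A \<sigma>)"
    unfolding fibers by (intro sum.cong refl sum_pfaffian_terms_fiber anti) simp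
  finally show ?thesis by simp
qed

definition skip :: "nat \<Rightarrow> nat \<Rightarrow> nat" where
  "skip j a = (if a < j then a else Suc a)"

(* the cycle j -> j+1 -> ... -> k -> j *)
definition consec_cycle :: "nat \<Rightarrow> nat \<Rightarrow> nat \<Rightarrow> nat" where
  "consec_cycle j k a = (if a < k then skip j a else if a = k then j else a)"

lemma consec_cycle_permutes_sign:
  "j \<le> k \<Longrightarrow> consec_cycle j k permutes {..k} \<and> sign (consec_cycle j k) = (-1) ^ (k - j)"
proof (induction "k - j" arbitrary: j)
  case 0
  then have "j = k" by simp
  then have "consec_cycle j k = id"
    by (auto simp: consec_cycle_def skip_def fun_eq_iff)
  with \<open>j = k\<close> show ?case
    by (metis permutes_id sign_id diff_self_eq_0 power_0)
next
  case (Suc d)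
  then have jk: "j < k" by simp
  let ?t = "transpose j (Suc j)"
  have eq: "consec_cycle j k = ?t \<circ> consec_cycle (Suc j) k"
    using jk by (auto simp: consec_cycle_def skip_def fun_eq_iff Transposition.transpose_def)
  have t: "?t permutes {..k}"
    using jk by (intro permutes_swap_id) auto
  have IH: "consec_cycle (Suc j) k permutes {..k}" "sign (consec_cycle (Suc j) k) = (-1) ^ (k - Suc j)"
    using Suc jk by simp_all
  have "consec_cycle j k permutes {..k}"
    unfolding eq using IH(1) t by (rule permutes_compose)
  have "sign (consec_cycle j k) = sign ?t * sign (consec_cycle (Suc j) k)"
    unfolding eq by (rule sign_compose) (auto intro: permutes_imp_permutation[OF _ t] permutes_imp_permutation[OF _ IH(1)])
  also have "\<dots> = (-1) ^ (k - j)"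
    using IH(2) jk Suc_diff_Suc[OF jk, symmetric] by (simp add: sign_swap_id)
  finally show ?case
    using \<open>consec_cycle j k permutes {..k}\<close> by simp
qed

lemma pfaffian_term_consec_cycle:
  assumes j: "j < 2*n+1" and \<rho>: "\<rho> permutes {..<2*n}"
  shows "pfaffian_term (Suc n) A (consec_cycle j (2*n) \<circ> \<rho>)
       = (-1) ^ j * A j (2*n+1) * pfaffian_term n (\<lambda>a b. A (skip j a) (skip j b)) \<rho>"
proof -
  let ?c = "consec_cycle j (2*n)"
  have c: "?c permutes {..2*n}" and sign_c: "sign ?c = (-1) ^ j"
    using consec_cycle_permutes_sign[of j "2*n"] j by (simp_all add: minus_one_power_iff)
  have sign: "sign (?c \<circ> \<rho>) = (-1) ^ j * sign \<rho>"
    using sign_compose[OF permutes_imp_permutation[OF _ c] permutes_imp_permutation[OF _ \<rho>]] sign_c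
    by simp
  have "?c (\<rho> a) = skip j (\<rho> a)" if "a < 2*n" for a
    using permutes_in_image[OF \<rho>] that by (simp add: consec_cycle_def)
  moreover have "\<rho> (2*n) = 2*n" "\<rho> (2*n+1) = 2*n+1"
    using permutes_not_in[OF \<rho>] by simp_all
  ultimately have prod: "(\<Prod>i<Suc n. A ((?c \<circ> \<rho>) (2*i)) ((?c \<circ> \<rho>) (2*i+1)))
      = (\<Prod>i<n. A (skip j (\<rho> (2*i))) (skip j (\<rho> (2*i+1)))) * A j (2*n+1)"
    by (simp add: consec_cycle_def)
  show ?thesis
    unfolding pfaffian_term_def sign prod by simp
qed

lemma sum_pfaffian_terms_last_pair:
  assumes j: "j < 2*n+1"
  shows "(\<Sum>\<sigma> | \<sigma> permutes {..<2*Suc n} \<and> \<sigma> (2*n+1) = 2*n+1 \<and> \<sigma> (2*n) = j. pfaffian_term (Suc n) A \<sigma>)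
       = (-1) ^ j * A j (2*n+1) *
         (\<Sum>\<rho> | \<rho> permutes {..<2*n}. pfaffian_term n (\<lambda>a b. A (skip j a) (skip j b)) \<rho>)"
proof -
  let ?c = "consec_cycle j (2*n)"
  have "?c permutes {..2*n}"
    using consec_cycle_permutes_sign[of j "2*n"] j by simp
  then have c: "?c permutes {..<2*Suc n}"
    by (rule permutes_subset) auto
  have c_last: "?c (2*n+1) = 2*n+1" "?c (2*n) = j"
    by (simp_all add: consec_cycle_def)
  have "(\<Sum>\<rho> | \<rho> permutes {..<2*n}.
           (-1) ^ j * A j (2*n+1) * pfaffian_term n (\<lambda>a b. A (skip j a) (skip j b)) \<rho>)
      = (\<Sum>\<sigma> | \<sigma> permutes {..<2*Suc n} \<and> \<sigma> (2*n+1) = 2*n+1 \<and> \<sigma> (2*n) = j.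
           pfaffian_term (Suc n) A \<sigma>)"
  proof (rule sum.reindex_bij_witness[where j="\<lambda>\<rho>. ?c \<circ> \<rho>" and i="\<lambda>\<sigma>. inv ?c \<circ> \<sigma>"])
    fix \<rho> assume "\<rho> \<in> {\<rho>. \<rho> permutes {..<2*n}}"
    then have \<rho>: "\<rho> permutes {..<2*n}" by simp
    then have "\<rho> permutes {..<2*Suc n}" "\<rho> (2*n) = 2*n" "\<rho> (2*n+1) = 2*n+1"
      using permutes_not_in[OF \<rho>] by (auto intro: permutes_subset)
    then show "?c \<circ> \<rho> \<in> {\<sigma>. \<sigma> permutes {..<2*Suc n} \<and> \<sigma> (2*n+1) = 2*n+1 \<and> \<sigma> (2*n) = j}"
      using permutes_compose[OF _ c] c_last by simp
    show "inv ?c \<circ> (?c \<circ> \<rho>) = \<rho>"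
      using permutes_inv_o(2)[OF c] by (simp add: o_assoc)
    show "pfaffian_term (Suc n) A (?c \<circ> \<rho>)
        = (-1) ^ j * A j (2*n+1) * pfaffian_term n (\<lambda>a b. A (skip j a) (skip j b)) \<rho>"
      by (rule pfaffian_term_consec_cycle[OF j \<rho>])
  next
    fix \<sigma> assume "\<sigma> \<in> {\<sigma>. \<sigma> permutes {..<2*Suc n} \<and> \<sigma> (2*n+1) = 2*n+1 \<and> \<sigma> (2*n) = j}"
    then have \<sigma>: "\<sigma> permutes {..<2*Suc n}" "\<sigma> (2*n+1) = 2*n+1" "\<sigma> (2*n) = j" by auto
    show "?c \<circ> (inv ?c \<circ> \<sigma>) = \<sigma>"
      using permutes_inv_o(1)[OF c] by (simp add: o_assoc)
    have inv_c: "inv ?c (2*n+1) = 2*n+1" "inv ?c j = 2*n"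
      using c_last by (simp_all add: permutes_inv_eq[OF c])
    have "(inv ?c \<circ> \<sigma>) x = x" if "x \<in> {..<2*Suc n} - {..<2*n}" for x
    proof -
      have "x = 2*n \<or> x = 2*n+1"
        using that by auto
      then show ?thesis
        using \<sigma>(2,3) inv_c by auto
    qed
    with permutes_compose[OF \<sigma>(1) permutes_inv[OF c]] have "inv ?c \<circ> \<sigma> permutes {..<2*n}"
      by (rule permutes_superset)
    then show "inv ?c \<circ> \<sigma> \<in> {\<rho>. \<rho> permutes {..<2*n}}" by simp
  qed
  then show ?thesis by (simp add: sum_distrib_left)
qed

lemma sum_pfaffian_terms_fix_last_split:
  "(\<Sum>\<sigma> | \<sigma> permutes {..<2*Suc n} \<and> \<sigma> (2*n+1) = 2*n+1. pfaffian_term (Suc n) A \<sigma>)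
   = (\<Sum>j<2*n+1. (-1) ^ j * A j (2*n+1) *
        (\<Sum>\<rho> | \<rho> permutes {..<2*n}. pfaffian_term n (\<lambda>a b. A (skip j a) (skip j b)) \<rho>))"
proof -
  let ?F = "{\<sigma>. \<sigma> permutes {..<2*Suc n} \<and> \<sigma> (2*n+1) = 2*n+1}"
  have fibers: "{\<sigma> \<in> ?F. \<sigma> (2*n) = j}
      = {\<sigma>. \<sigma> permutes {..<2*Suc n} \<and> \<sigma> (2*n+1) = 2*n+1 \<and> \<sigma> (2*n) = j}" for j
    by auto
  have "(\<Sum>\<sigma>\<in>?F. pfaffian_term (Suc n) A \<sigma>)
      = (\<Sum>j<2*n+1. \<Sum>\<sigma> \<in> {\<sigma> \<in> ?F. \<sigma> (2*n) = j}. pfaffian_term (Suc n) A \<sigma>)"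
  proof (rule sum.group[symmetric])
    show "finite ?F"
      by (rule finite_subset[OF _ finite_permutations[of "{..<2*Suc n}"]]) auto
    have "\<sigma> (2*n) < 2*n+1" if "\<sigma> \<in> ?F" for \<sigma>
    proof -
      have \<sigma>: "\<sigma> permutes {..<2*Suc n}" "\<sigma> (2*n+1) = 2*n+1"
        using that by auto
      have "\<sigma> (2*n) < 2*Suc n" "\<sigma> (2*n) \<noteq> \<sigma> (2*n+1)"
        using permutes_in_image[OF \<sigma>(1)] inj_eq[OF permutes_inj[OF \<sigma>(1)]] by simp_all
      then show ?thesis
        using \<sigma>(2) by simp
    qed
    then show "(\<lambda>\<sigma>. \<sigma> (2*n)) ` ?F \<subseteq> {..<2*n+1}"
      by auto
  qed simp
  also have "\<dots> = (\<Sum>j<2*n+1. (-1) ^ j * A j (2*n+1) *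
        (\<Sum>\<rho> | \<rho> permutes {..<2*n}. pfaffian_term n (\<lambda>a b. A (skip j a) (skip j b)) \<rho>))"
    unfolding fibers by (intro sum.cong refl sum_pfaffian_terms_last_pair) simp
  finally show ?thesis by simp
qed

lemma pfaffian_Suc:
  assumes anti: "\<And>a b. A b a = - A a b"
  shows "pfaffian (Suc n) A
       = (\<Sum>j<2*n+1. (-1) ^ j * A j (2*n+1) * pfaffian n (\<lambda>a b. A (skip j a) (skip j b)))"
proof -
  let ?D = "(2::real) ^ n * fact n"
  let ?T = "\<lambda>j. \<Sum>\<rho> | \<rho> permutes {..<2*n}. pfaffian_term n (\<lambda>a b. A (skip j a) (skip j b)) \<rho>"
  have "(2::real) ^ Suc n * fact (Suc n) = of_nat (2*Suc n) * ?D"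
    by (simp add: fact_Suc)
  then have "pfaffian (Suc n) A
      = of_nat (2*Suc n) * (\<Sum>j<2*n+1. (-1) ^ j * A j (2*n+1) * ?T j) / (of_nat (2*Suc n) * ?D)"
    unfolding pfaffian_eq_sum_terms sum_pfaffian_terms_fix_last[OF anti]
      sum_pfaffian_terms_fix_last_split by (simp only:)
  also have "\<dots> = (\<Sum>j<2*n+1. (-1) ^ j * A j (2*n+1) * (?T j / ?D))"
    by (simp only: sum_divide_distrib[symmetric] times_divide_eq_right) simp
  finally show ?thesis
    unfolding pfaffian_eq_sum_terms .
qed

lemma pfaffian_1:
  assumes anti: "\<And>a b. A b a = - A a b"
  shows "pfaffian 1 A = A 0 1"
  using pfaffian_Suc[where A=A, OF anti, of 0] by simp

lemma pfaffian_pentadiagonal: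
  fixes g :: "nat \<Rightarrow> nat \<Rightarrow> real"
  assumes anti: "\<And>a b. g b a = - g a b" and band: "\<And>a b. a+3 \<le> b \<Longrightarrow> g a b = 0"
  shows "pfaffian (n+2) g
       = g (2*n+2) (2*n+3) * pfaffian (n+1) g - g (2*n+1) (2*n+3) * g (2*n) (2*n+2) * pfaffian n g"
proof -
  define B where "B = (\<lambda>a b. g (skip (2*n+1) a) (skip (2*n+1) b))"
  have anti_B: "\<And>a b. B b a = - B a b"
    unfolding B_def by (rule anti)
  have "pfaffian (n+1) B
      = (\<Sum>j<2*n+1. (-1) ^ j * B j (2*n+1) * pfaffian n (\<lambda>a b. B (skip j a) (skip j b)))"
    using pfaffian_Suc[where A=B, OF anti_B] by simp
  also have "\<dots> = B (2*n) (2*n+1) * pfaffian n (\<lambda>a b. B (skip (2*n) a) (skip (2*n) b))"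
    by (simp add: B_def skip_def band)
  also have "\<dots> = g (2*n) (2*n+2) * pfaffian n g"
    by (auto simp: B_def skip_def intro!: pfaffian_cong arg_cong2[where f="(*)"])
  finally have minor: "pfaffian (n+1) B = g (2*n) (2*n+2) * pfaffian n g" .
  let ?t = "\<lambda>j. (-1) ^ j * g j (2*n+3) * pfaffian (n+1) (\<lambda>a b. g (skip j a) (skip j b))"
  have idx: "Suc (n+1) = n+2" "2*(n+1)+1 = 2*n+3"
    by simp_all
  have split: "{..<2*n+3} = insert (2*n+2) (insert (2*n+1) {..<2*n+1})"
    by auto
  have "pfaffian (n+2) g = (\<Sum>j<2*n+3. ?t j)"
    using pfaffian_Suc[where A=g, OF anti, of "n+1"] unfolding idx .
  also have "\<dots> = ?t (2*n+2) + ?t (2*n+1) + (\<Sum>j<2*n+1. ?t j)"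
    unfolding split by (simp add: add.assoc)
  also have "(\<Sum>j<2*n+1. ?t j) = 0"
    by (intro sum.neutral) (simp add: band)
  also have "?t (2*n+1) = - g (2*n+1) (2*n+3) * pfaffian (n+1) B"
    by (simp add: B_def)
  also have "pfaffian (n+1) (\<lambda>a b. g (skip (2*n+2) a) (skip (2*n+2) b)) = pfaffian (n+1) g"
    by (intro pfaffian_cong) (simp add: skip_def)
  finally show ?thesis
    unfolding minor by simp
qed

section \<open>Pentadiagonal antisymmetric matrices\<close>

lemma sum_column_pentadiagonal:
  fixes g :: "nat \<Rightarrow> nat \<Rightarrow> real"
  assumes anti: "\<And>a b. g b a = - g a b" and band: "\<And>a b. a+3 \<le> b \<Longrightarrow> g a b = 0"
    and L: "i+2 \<le> L"
  shows "(\<Sum>a\<le>L. c a * g a i) = (\<Sum>a\<in>{i-2..i+2}. c a * g a i)"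
proof (rule sum.mono_neutral_right)
  show "{i-2..i+2} \<subseteq> {..L}"
    using L by auto
  have "g a i = 0" if "a \<notin> {i-2..i+2}" for a
  proof -
    have "a + 3 \<le> i \<or> i + 3 \<le> a"
      using that by auto
    then show ?thesis
      using band[of a i] band[of i a] anti[of a i] by auto
  qed
  then show "\<forall>a\<in>{..L} - {i-2..i+2}. c a * g a i = 0"
    by simp
qed simp

context
  fixes g :: "nat \<Rightarrow> nat \<Rightarrow> real" and c :: "nat \<Rightarrow> real" and k :: nat
  assumes anti: "\<And>a b. g b a = - g a b" and band: "\<And>a b. a+3 \<le> b \<Longrightarrow> g a b = 0"
    and nz: "\<And>u. pfaffian u g \<noteq> 0"
    and rec_odd: "\<And>u. u < k \<Longrightarrow>
      pfaffian (u+1) g * c (2*u+1) = - g (2*u) (2*u+2) * pfaffian u g * c (2*u+2)"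
    and rec_even: "\<And>u. u < k \<Longrightarrow>
      pfaffian (u+1) g * c (2*u) =
        pfaffian u g * (g (2*u+1) (2*u+3) * c (2*u+3) + g (2*u+1) (2*u+2) * c (2*u+2))"
begin

lemma pentadiagonal_column_0:
  assumes "0 < k"
  shows "(\<Sum>a\<le>2*k+1. c a * g a 0) = 0"
proof -
  have "{0-2..0+2} = {0::nat, 1, 2}"
    by auto
  then have "(\<Sum>a\<le>2*k+1. c a * g a 0) = c 1 * g 1 0 + c 2 * g 2 0"
    using sum_column_pentadiagonal[where g=g and i=0 and L="2*k+1", OF anti band] assms anti[of 0 0] by simp
  moreover have "pfaffian 1 g * c 1 = - g 0 2 * c 2"
    using rec_odd[of 0] assms by (simp add: numeral_2_eq_2)
  ultimately show ?thesis
    using pfaffian_1[where A=g, OF anti] anti[of 0 1] anti[of 0 2] by algebra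
qed

lemma pentadiagonal_column_1:
  assumes "0 < k"
  shows "(\<Sum>a\<le>2*k+1. c a * g a 1) = 0"
proof -
  have "{1-2..1+2} = {0::nat, 1, 2, 3}"
    by auto
  then have "(\<Sum>a\<le>2*k+1. c a * g a 1) = c 0 * g 0 1 + c 2 * g 2 1 + c 3 * g 3 1"
    using sum_column_pentadiagonal[where g=g and i=1 and L="2*k+1", OF anti band] assms anti[of 1 1] by simp
  moreover have "pfaffian 1 g * c 0 = g 1 3 * c 3 + g 1 2 * c 2"
    using rec_even[of 0] assms by (simp add: numeral_2_eq_2 numeral_3_eq_3)
  ultimately show ?thesis
    using pfaffian_1[where A=g, OF anti] anti[of 1 2] anti[of 1 3] by algebra
qed

lemma pentadiagonal_column_even:
  assumes "t+1 < k"
  shows "(\<Sum>a\<le>2*k+1. c a * g a (2*t+2)) = 0"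
proof -
  let ?P = "\<lambda>u. pfaffian u g"
  have "{2*t+2-2..2*t+2+2} = {2*t, 2*t+1, 2*t+2, 2*t+3, 2*t+4}"
    by auto
  then have "(\<Sum>a\<le>2*k+1. c a * g a (2*t+2)) = c (2*t) * g (2*t) (2*t+2) + c (2*t+1) * g (2*t+1) (2*t+2)
      + c (2*t+3) * g (2*t+3) (2*t+2) + c (2*t+4) * g (2*t+4) (2*t+2)"
    using sum_column_pentadiagonal[where g=g and i="2*t+2" and L="2*k+1", OF anti band] assms anti[of "2*t+2" "2*t+2"]
    by simp
  moreover have "?P (t+1) * c (2*t) = ?P t * (g (2*t+1) (2*t+3) * c (2*t+3) + g (2*t+1) (2*t+2) * c (2*t+2))"
    "?P (t+1) * c (2*t+1) = - g (2*t) (2*t+2) * ?P t * c (2*t+2)"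
    "?P (t+2) * c (2*t+3) = - g (2*t+2) (2*t+4) * ?P (t+1) * c (2*t+4)"
    using rec_even[of t] rec_odd[of t] rec_odd[of "t+1"] assms by (simp_all add: eval_nat_numeral)
  ultimately have "?P (t+1) * (\<Sum>a\<le>2*k+1. c a * g a (2*t+2)) = 0"
    using pfaffian_pentadiagonal[where g=g, OF anti band, of t] anti[of "2*t+2" "2*t+3"] anti[of "2*t+2" "2*t+4"]
    by algebra
  then show ?thesis
    using nz by simp
qed

lemma pentadiagonal_column_odd:
  assumes "t+1 < k"
  shows "(\<Sum>a\<le>2*k+1. c a * g a (2*t+3)) = 0"
proof -
  let ?P = "\<lambda>u. pfaffian u g"
  have "{2*t+3-2..2*t+3+2} = {2*t+1, 2*t+2, 2*t+3, 2*t+4, 2*t+5}"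
    by auto
  then have "(\<Sum>a\<le>2*k+1. c a * g a (2*t+3)) = c (2*t+1) * g (2*t+1) (2*t+3) + c (2*t+2) * g (2*t+2) (2*t+3)
      + c (2*t+4) * g (2*t+4) (2*t+3) + c (2*t+5) * g (2*t+5) (2*t+3)"
    using sum_column_pentadiagonal[where g=g and i="2*t+3" and L="2*k+1", OF anti band] assms anti[of "2*t+3" "2*t+3"]
    by simp
  moreover have "?P (t+2) * c (2*t+2) = ?P (t+1) * (g (2*t+3) (2*t+5) * c (2*t+5) + g (2*t+3) (2*t+4) * c (2*t+4))"
    "?P (t+1) * c (2*t+1) = - g (2*t) (2*t+2) * ?P t * c (2*t+2)"
    using rec_even[of "t+1"] rec_odd[of t] assms by (simp_all add: eval_nat_numeral)
  ultimately have "?P (t+1) * (\<Sum>a\<le>2*k+1. c a * g a (2*t+3)) = 0"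
    using pfaffian_pentadiagonal[where g=g, OF anti band, of t] anti[of "2*t+3" "2*t+4"] anti[of "2*t+3" "2*t+5"]
    by algebra
  then show ?thesis
    using nz by simp
qed

lemma pentadiagonal_coeffs_orthogonal:
  assumes "i < 2*k"
  shows "(\<Sum>a\<le>2*k+1. c a * g a i) = 0"
proof -
  have "i = 0 \<or> i = 1 \<or> (\<exists>t. i = 2*t+2) \<or> (\<exists>t. i = 2*t+3)"
    by presburger
  then show ?thesis
    using assms pentadiagonal_column_0 pentadiagonal_column_1
      pentadiagonal_column_even pentadiagonal_column_odd by auto
qed

end

section \<open>Moments and the skew product\<close>

lemma moment_swap: "moment M k j = cnj (moment M j k)"
proof -
  have "moment M k j = (LINT z|M. cnj (z ^ j * cnj z ^ k))"
    unfolding moment_def by (simp add: mult.commute)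
  also have "\<dots> = cnj (moment M j k)"
    unfolding moment_def by (rule Bochner_Integration.integral_cnj)
  finally show ?thesis .
qed

lemma mhat_swap: "mhat M k j = mhat M j k"
  unfolding mhat_def by (subst moment_swap) simp

lemma gmat_antisym: "gmat M b a = - gmat M a b"
  unfolding gmat_def using mhat_swap[of M "b+1" a] mhat_swap[of M b "a+1"] by simp

context
  fixes M :: "complex measure"
  assumes tridiag: "\<forall>j k. 2 \<le> \<bar>int j - int k\<bar> \<longrightarrow> moment M j k = 0"
begin

lemma mhat_eq_0: "2 \<le> \<bar>int j - int k\<bar> \<Longrightarrow> mhat M j k = 0"
  using tridiag unfolding mhat_def by simp

lemma gmat_band: "a+3 \<le> b \<Longrightarrow> gmat M a b = 0"
  unfolding gmat_def by (simp add: mhat_eq_0)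

lemma gmat_Suc: "gmat M a (a+1) = 2 * mhat M (a+1) (a+1)"
  unfolding gmat_def by (simp add: mhat_eq_0)

lemma gmat_Suc_Suc: "gmat M a (a+2) = 2 * mhat M (a+1) (a+2)"
  unfolding gmat_def by (simp add: mhat_eq_0)

end

lemma Delta_eq_pfaffian: "Delta M (int k) = pfaffian (Suc k) (gmat M)"
  unfolding Delta_def by simp

lemma Zc_Suc: "Zc M (Suc u) = pfaffian (Suc u) (gmat M) / (2 * pfaffian u (gmat M))"
proof -
  have "Delta M (int u - 1) = pfaffian u (gmat M)"
  proof (cases u)
    case (Suc v)
    then have "int u - 1 = int v" by simp
    then show ?thesis
      using Suc by (simp add: Delta_eq_pfaffian)
  qed (simp add: Delta_def)
  then show ?thesis
    unfolding Zc_def by (simp add: Delta_eq_pfaffian)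
qed

lemma moment_coeffs_orthogonal:
  fixes c :: "nat \<Rightarrow> real"
  assumes tridiag: "\<forall>j k. 2 \<le> \<bar>int j - int k\<bar> \<longrightarrow> moment M j k = 0"
    and Delta_nz: "\<forall>k::nat. Delta M (int k) \<noteq> 0"
    and rec1: "\<forall>j. 1 \<le> j \<and> j \<le> k \<longrightarrow>
       Zc M j * c (2*j-1) = - mhat M (2*j-1) (2*j) * c (2*j)"
    and rec2: "\<forall>j. 1 \<le> j \<and> j \<le> k \<longrightarrow>
       Zc M j * c (2*j-2) = mhat M (2*j) (2*j+1) * c (2*j+1) + mhat M (2*j) (2*j) * c (2*j)"
    and i: "i < 2*k"
  shows "(\<Sum>a\<le>2*k+1. c a * gmat M a i) = 0"
proof -
  let ?P = "\<lambda>u. pfaffian u (gmat M)"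
  have nz: "?P u \<noteq> 0" for u
    using Delta_nz by (cases u) (simp_all add: Delta_eq_pfaffian)
  have Z: "?P (u+1) = 2 * ?P u * Zc M (u+1)" for u
    using nz[of u] by (simp add: Zc_Suc)
  have rec_odd: "?P (u+1) * c (2*u+1) = - gmat M (2*u) (2*u+2) * ?P u * c (2*u+2)" if "u < k" for u
  proof -
    have "Zc M (u+1) * c (2*u+1) = - mhat M (2*u+1) (2*u+2) * c (2*u+2)"
      using rec1[rule_format, of "u+1"] that by simp
    moreover have "gmat M (2*u) (2*u+2) = 2 * mhat M (2*u+1) (2*u+2)"
      using gmat_Suc_Suc[OF tridiag, of "2*u"] by simp
    ultimately show ?thesis
      unfolding Z by algebra
  qed
  have rec_even: "?P (u+1) * c (2*u) =
      ?P u * (gmat M (2*u+1) (2*u+3) * c (2*u+3) + gmat M (2*u+1) (2*u+2) * c (2*u+2))"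
    if "u < k" for u
  proof -
    have "Zc M (u+1) * c (2*u) = mhat M (2*u+2) (2*u+3) * c (2*u+3) + mhat M (2*u+2) (2*u+2) * c (2*u+2)"
      using rec2[rule_format, of "u+1"] that by (simp add: eval_nat_numeral)
    moreover have "gmat M (2*u+1) (2*u+3) = 2 * mhat M (2*u+2) (2*u+3)"
      "gmat M (2*u+1) (2*u+2) = 2 * mhat M (2*u+2) (2*u+2)"
      using gmat_Suc_Suc[OF tridiag, of "2*u+1"] gmat_Suc[OF tridiag, of "2*u+1"] by (simp_all add: eval_nat_numeral)
    ultimately show ?thesis
      unfolding Z by algebra
  qed
  show ?thesis
    using pentadiagonal_coeffs_orthogonal[where g="gmat M", OF gmat_antisym gmat_band[OF tridiag] nz
        rec_odd rec_even i] .
qed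

lemma skew_antisym: "skew M g f = - skew M f g"
  unfolding skew_def by (simp add: algebra_simps flip: integral_minus)

lemma skew_self: "skew M f f = 0"
  unfolding skew_def by simp

lemma skew_monomials:
  assumes moments: "\<forall>j k. integrable M (\<lambda>z. z ^ j * cnj z ^ k)"
  shows "integrable M (\<lambda>z. (z ^ a * cnj z ^ b - z ^ b * cnj z ^ a) * (z - cnj z))"
    and "skew M (\<lambda>z. z ^ a) (\<lambda>z. z ^ b) = of_real (gmat M a b)"
proof -
  have expand: "(\<lambda>z. (z ^ a * cnj z ^ b - z ^ b * cnj z ^ a) * (z - cnj z)) =
      (\<lambda>z. z ^ (a+1) * cnj z ^ b - z ^ a * cnj z ^ (b+1) - z ^ (b+1) * cnj z ^ a + z ^ b * cnj z ^ (a+1))"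
    by (auto simp: fun_eq_iff algebra_simps)
  have int: "integrable M (\<lambda>z. z ^ j * cnj z ^ k)" for j k
    using moments by blast
  show "integrable M (\<lambda>z. (z ^ a * cnj z ^ b - z ^ b * cnj z ^ a) * (z - cnj z))"
    unfolding expand by (intro Bochner_Integration.integrable_add Bochner_Integration.integrable_diff int)
  have "skew M (\<lambda>z. z ^ a) (\<lambda>z. z ^ b)
      = moment M (a+1) b - moment M a (b+1) - moment M (b+1) a + moment M b (a+1)"
    unfolding skew_def moment_def complex_cnj_power expand
    by (subst Bochner_Integration.integral_add Bochner_Integration.integral_diff,
        (intro Bochner_Integration.integrable_add Bochner_Integration.integrable_diff int)+)+ (rule refl)
  also have "\<dots> = (moment M (a+1) b + cnj (moment M (a+1) b)) - (moment M a (b+1) + cnj (moment M a (b+1)))"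
    using moment_swap[of M "b+1" a] moment_swap[of M b "a+1"] by simp
  also have "\<dots> = of_real (gmat M a b)"
    unfolding complex_add_cnj gmat_def mhat_def by simp
  finally show "skew M (\<lambda>z. z ^ a) (\<lambda>z. z ^ b) = of_real (gmat M a b)" .
qed

lemma skew_sum_monom:
  assumes moments: "\<forall>j k. integrable M (\<lambda>z. z ^ j * cnj z ^ k)"
  shows "skew M (poly (\<Sum>a\<le>N. monom (of_real (c a)) a)) (poly (\<Sum>b\<le>N'. monom (of_real (d b)) b))
       = of_real (\<Sum>a\<le>N. \<Sum>b\<le>N'. c a * d b * gmat M a b)"
proof -
  define F where "F a b z = (z ^ a * cnj z ^ b - z ^ b * cnj z ^ a) * (z - cnj z)" for a b and z :: complex
  let ?p = "poly (\<Sum>a\<le>N. monom (of_real (c a)) a)" and ?q = "poly (\<Sum>b\<le>N'. monom (of_real (d b)) b)"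
  have "(?p z * cnj (?q z) - ?q z * cnj (?p z)) * (z - cnj z)
      = (\<Sum>a\<le>N. \<Sum>b\<le>N'. of_real (c a * d b) * F a b z)" for z
  proof -
    have p: "?p z = (\<Sum>a\<le>N. of_real (c a) * z ^ a)" and q: "?q z = (\<Sum>b\<le>N'. of_real (d b) * z ^ b)"
      by (simp_all add: poly_sum poly_monom)
    have "?p z * cnj (?q z) = (\<Sum>a\<le>N. \<Sum>b\<le>N'. of_real (c a) * z ^ a * (of_real (d b) * cnj z ^ b))"
      unfolding p q by (simp add: sum_product)
    moreover have "?q z * cnj (?p z) = (\<Sum>a\<le>N. \<Sum>b\<le>N'. of_real (d b) * z ^ b * (of_real (c a) * cnj z ^ a))"
      unfolding p q by (simp add: sum_product sum.swap[of _ "{..N'}"])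
    ultimately have "(?p z * cnj (?q z) - ?q z * cnj (?p z)) * (z - cnj z)
        = (\<Sum>a\<le>N. \<Sum>b\<le>N'. (of_real (c a) * z ^ a * (of_real (d b) * cnj z ^ b)
            - of_real (d b) * z ^ b * (of_real (c a) * cnj z ^ a)) * (z - cnj z))"
      by (simp only: sum_subtractf[symmetric] sum_distrib_right)
    also have "\<dots> = (\<Sum>a\<le>N. \<Sum>b\<le>N'. of_real (c a * d b) * F a b z)"
      by (intro sum.cong refl) (simp add: F_def algebra_simps)
    finally show ?thesis .
  qed
  then have "skew M ?p ?q = (LINT z|M. (\<Sum>a\<le>N. \<Sum>b\<le>N'. of_real (c a * d b) * F a b z))"
    unfolding skew_def by simp
  also have "\<dots> = (\<Sum>a\<le>N. \<Sum>b\<le>N'. of_real (c a * d b) * skew M (\<lambda>z. z ^ a) (\<lambda>z. z ^ b))"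
    using skew_monomials(1)[OF moments] unfolding F_def skew_def complex_cnj_power
    by (simp add: Bochner_Integration.integrable_sum)
  also have "\<dots> = of_real (\<Sum>a\<le>N. \<Sum>b\<le>N'. c a * d b * gmat M a b)"
    by (simp add: skew_monomials(2)[OF moments])
  finally show ?thesis .
qed

lemma sum_sum_antisym_eq_0:
  fixes g :: "nat \<Rightarrow> nat \<Rightarrow> real"
  assumes anti: "\<And>a b. g b a = - g a b"
    and orth: "\<And>i. i \<le> N \<Longrightarrow> (\<Sum>b\<le>N'. d b * g b i) = 0"
  shows "(\<Sum>a\<le>N. \<Sum>b\<le>N'. c a * d b * g a b) = 0"
proof -
  have "(\<Sum>b\<le>N'. c a * d b * g a b) = - c a * (\<Sum>b\<le>N'. d b * g b a)" for a
    by (simp add: sum_distrib_left anti[of a] mult.assoc)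
  then have "(\<Sum>a\<le>N. \<Sum>b\<le>N'. c a * d b * g a b) = (\<Sum>a\<le>N. - c a * (\<Sum>b\<le>N'. d b * g b a))"
    by simp
  also have "\<dots> = 0"
    using orth by simp
  finally show ?thesis .
qed

lemma degree_lead_coeff_sum_monom:
  fixes f :: "nat \<Rightarrow> 'a::{comm_monoid_add, zero_neq_one}"
  assumes "f n = 1"
  shows "degree (\<Sum>a\<le>n. monom (f a) a) = n \<and> lead_coeff (\<Sum>a\<le>n. monom (f a) a) = 1"
proof -
  have coeff: "coeff (\<Sum>a\<le>n. monom (f a) a) i = (if i \<le> n then f i else 0)" for i
    by (simp add: coeff_sum)
  have "degree (\<Sum>a\<le>n. monom (f a) a) = n"
    by (intro antisym degree_le le_degree) (simp_all add: coeff assms)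
  then show ?thesis
    by (simp add: coeff assms)
qed

lemma skew_orthogonal_of_vanishing_below:
  fixes p :: "nat \<Rightarrow> complex \<Rightarrow> complex"
  assumes vanish: "\<And>n m. n < 2 * (m div 2) \<Longrightarrow> skew M (p n) (p m) = 0"
  shows "(\<forall>k l. skew M (p (2*k)) (p (2*l)) = 0)
    \<and> (\<forall>k l. skew M (p (2*k+1)) (p (2*l+1)) = 0)
    \<and> (\<exists>r. \<forall>k l. skew M (p (2*k)) (p (2*l+1)) = (if k = l then r k else 0)
        \<and> skew M (p (2*l+1)) (p (2*k)) = - (if k = l then r k else 0))"
proof -
  have far: "skew M (p n) (p m) = 0" if "n div 2 \<noteq> m div 2" for n m
  proof (cases "n div 2 < m div 2")
    case True
    then have "n < 2 * (m div 2)"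
      by presburger
    then show ?thesis
      by (rule vanish)
  next
    case False
    with that have "m < 2 * (n div 2)"
      by presburger
    then show ?thesis
      using vanish[of m n] skew_antisym[of M "p m" "p n"] by simp
  qed
  define r where "r k = skew M (p (2*k)) (p (2*k+1))" for k
  have "skew M (p (2*k)) (p (2*l)) = 0" "skew M (p (2*k+1)) (p (2*l+1)) = 0" for k l
    using far[of "2*k" "2*l"] far[of "2*k+1" "2*l+1"] skew_self[of M] by (cases "k = l"; simp)+
  moreover have eo: "skew M (p (2*k)) (p (2*l+1)) = (if k = l then r k else 0)" for k l
    using far[of "2*k" "2*l+1"] by (simp add: r_def)
  moreover have "skew M (p (2*l+1)) (p (2*k)) = - (if k = l then r k else 0)" for k l
    using eo[of k l] skew_antisym[of M "p (2*l+1)" "p (2*k)"] by simp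
  ultimately show ?thesis
    by blast
qed

lemma skew_orthogonal_sum_monom:
  fixes c :: "nat \<Rightarrow> nat \<Rightarrow> real" and q :: "nat \<Rightarrow> complex poly"
  assumes moments: "\<forall>j k. integrable M (\<lambda>z. z ^ j * cnj z ^ k)"
    and q: "\<And>n. q n = (\<Sum>a\<le>n. monom (of_real (c n a)) a)" and monic: "\<And>n. c n n = 1"
    and orth: "\<And>n i. i < 2 * (n div 2) \<Longrightarrow> (\<Sum>a\<le>n. c n a * gmat M a i) = 0"
  shows "(\<forall>n. degree (q n) = n \<and> lead_coeff (q n) = 1)
    \<and> (\<forall>k l. skew M (poly (q (2*k))) (poly (q (2*l))) = 0)
    \<and> (\<forall>k l. skew M (poly (q (2*k+1))) (poly (q (2*l+1))) = 0)
    \<and> (\<exists>r. \<forall>k l. skew M (poly (q (2*k))) (poly (q (2*l+1))) = (if k = l then r k else 0)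
        \<and> skew M (poly (q (2*l+1))) (poly (q (2*k))) = - (if k = l then r k else 0))"
proof -
  have "degree (q n) = n \<and> lead_coeff (q n) = 1" for n
    unfolding q by (rule degree_lead_coeff_sum_monom) (simp add: monic)
  moreover have "skew M (poly (q n)) (poly (q m)) = 0" if "n < 2 * (m div 2)" for n m
    unfolding q skew_sum_monom[OF moments]
    using sum_sum_antisym_eq_0[OF gmat_antisym orth] that by simp
  ultimately show ?thesis
    using skew_orthogonal_of_vanishing_below[where p="\<lambda>n. poly (q n)" and M=M] by blast
qed

theorem theorem4p1:
  fixes M :: "complex measure" and \<alpha> \<beta> :: "nat \<Rightarrow> nat \<Rightarrow> real"
    and q :: "nat \<Rightarrow> complex poly"
  assumes borel: "sets M = sets borel"
    and finite_moments: "\<forall>j k. integrable M (\<lambda>z. z ^ j * cnj z ^ k)"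
    and tridiag: "\<forall>j k. 2 \<le> \<bar>int j - int k\<bar> \<longrightarrow> moment M j k = 0"
    and Delta_nz: "\<forall>k::nat. Delta M (int k) \<noteq> 0"
    and a_top: "\<forall>k. \<alpha> (2*k) (2*k) = 1"
    and a_conv: "\<forall>k. \<alpha> (2*k) (2*k+1) = 0"
    and b_top: "\<forall>k. \<beta> (2*k+1) (2*k+1) = 1"
    and b_zero1: "\<forall>k. \<beta> (2*k+1) (2*k) = 0"
    and b_zero2: "\<forall>k\<ge>1. \<beta> (2*k+1) (2*k-1) = 0"
    and a_rec1: "\<forall>k j. 1 \<le> j \<and> j \<le> k \<longrightarrow>
       Zc M j * \<alpha> (2*k) (2*j-1) = - mhat M (2*j-1) (2*j) * \<alpha> (2*k) (2*j)"
    and a_rec2: "\<forall>k j. 1 \<le> j \<and> j \<le> k \<longrightarrow>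
       Zc M j * \<alpha> (2*k) (2*j-2) = mhat M (2*j) (2*j+1) * \<alpha> (2*k) (2*j+1) + mhat M (2*j) (2*j) * \<alpha> (2*k) (2*j)"
    and b_rec1: "\<forall>k j. 1 \<le> j \<and> j \<le> k \<longrightarrow>
       Zc M j * \<beta> (2*k+1) (2*j-1) = - mhat M (2*j-1) (2*j) * \<beta> (2*k+1) (2*j)"
    and b_rec2: "\<forall>k j. 1 \<le> j \<and> j \<le> k \<longrightarrow>
       Zc M j * \<beta> (2*k+1) (2*j-2) = mhat M (2*j) (2*j+1) * \<beta> (2*k+1) (2*j+1) + mhat M (2*j) (2*j) * \<beta> (2*k+1) (2*j)"
    and q_even: "\<forall>k. q (2*k) = (\<Sum>j\<le>2*k. monom (complex_of_real (\<alpha> (2*k) j)) j)"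
    and q_odd: "\<forall>k. q (2*k+1) = (\<Sum>j\<le>2*k+1. monom (complex_of_real (\<beta> (2*k+1) j)) j)"
  shows "(\<forall>n. degree (q n) = n \<and> lead_coeff (q n) = 1)
    \<and> (\<forall>k l. skew M (poly (q (2*k))) (poly (q (2*l))) = 0)
    \<and> (\<forall>k l. skew M (poly (q (2*k+1))) (poly (q (2*l+1))) = 0)
    \<and> (\<exists>r::nat \<Rightarrow> complex. \<forall>k l.
          skew M (poly (q (2*k))) (poly (q (2*l+1))) = (if k = l then r k else 0)
        \<and> skew M (poly (q (2*l+1))) (poly (q (2*k))) = - (if k = l then r k else 0))"
proof -
  define c where "c n = (if even n then \<alpha> n else \<beta> n)" for n
  have "q n = (\<Sum>a\<le>n. monom (of_real (c n a)) a) \<and> c n n = 1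
      \<and> (\<forall>i < 2 * (n div 2). (\<Sum>a\<le>n. c n a * gmat M a i) = 0)" for n
  proof (cases "even n")
    case True
    then obtain k where n: "n = 2*k" ..
    have "(\<Sum>a\<le>2*k+1. \<alpha> n a * gmat M a i) = 0" if "i < 2*k" for i
      using moment_coeffs_orthogonal[where c="\<alpha> n", OF tridiag Delta_nz _ _ that]
        a_rec1 a_rec2 n by blast
    then show ?thesis
      using q_even a_top a_conv n by (simp add: c_def)
  next
    case False
    then obtain k where n: "n = 2*k+1" using oddE by blast
    have "(\<Sum>a\<le>2*k+1. \<beta> n a * gmat M a i) = 0" if "i < 2*k" for i
      using moment_coeffs_orthogonal[where c="\<beta> n", OF tridiag Delta_nz _ _ that]
        b_rec1 b_rec2 n by blast
    then show ?thesis
      using q_odd b_top n by (simp add: c_def)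
  qed
  then show ?thesis
    using skew_orthogonal_sum_monom[OF finite_moments, of q c] by blast
qed

end
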